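(* Let $M,N\ge 1$ be integers, and let $l,k\in\mathbb{R}$, $\alpha\in\mathbb{C}$, $E_s,E_p>0$, $\sigma^2>0$, $N_r\ge 1$. Fix a delay index $m_p\in\{0,\dots,M-1\}$ and a Doppler index $n_p\in\{0,\dots,N-1\}$. Let $\mathbf{X}_d\in\mathbb{C}^{M\times N}$ be a data matrix with $\mathbf{x}_d=\mathrm{vec}(\mathbf{X}_d)$, and let the pilot vector be $$\mathbf{x}_p=(\mathbf{1}_N\otimes\mathbf{e}_{m_p})+\mathbf{e}_{n_p}\otimes(\mathbf{1}_M-\mathbf{e}_{m_p})\in\mathbb{C}^{MN},$$ and $\mathbf{x}=\sqrt{E_s}\,\mathbf{x}_d+\sqrt{E_p}\,\mathbf{x}_p$. Suppose the delay-Doppler observation is $$\mathbf{y}=\alpha\big(\mathbf{F}_N\mathbf{D}_N^{k}\mathbf{F}_N^{\mathsf{H}}\otimes\tilde{\mathbf{D}}_M^{k}\mathbf{C}_M(l)\big)\mathbf{x}+\mathbf{z},\qquad \mathbf{z}\sim\mathcal{CN}\big(\mathbf{0}_{MN},\tfrac{\sigma^2}{N_r}\mathbf{I}_{MN}\big),$$ and define the integrated delay profile $\mathbf{u}=\frac{1}{N}(\mathbf{1}_N^\top\otimes\mathbf{I}_M)\mathbf{y}\in\mathbb{C}^M$ (equivalently $\mathbf{u}=\mathbf{Y}\mathbf{1}_N/N$ where $\mathbf{y}=\mathrm{vec}(\mathbf{Y})$, $\mathbf{Y}\in\mathbb{C}^{M\times N}$). Then $$\mathbf{u}=\alpha\Big(\frac{\sqrt{E_p}}{N}\mathbf{g}_u(l,k)+\frac{\sqrt{E_s}}{N}\tilde{\mathbf{D}}_M^{k}\mathbf{C}_M(l)\sum_{n=0}^{N-1}[\mathbf{X}_d]_{:,n}\Big)+\tilde{\mathbf{z}}_u,$$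 where $\tilde{\mathbf{z}}_u\sim\mathcal{CN}\big(\mathbf{0}_M,\frac{\sigma^2}{NN_r}\mathbf{I}_M\big)$ and $$\mathbf{g}_u(l,k)=(N-1)\,\tilde{\mathbf{D}}_M^{k}\mathbf{F}_M^{\mathsf{H}}\big([\mathbf{F}_M]_{:,m_p}\odot\mathbf{d}_M^{-l}\big)+\tilde{\mathbf{d}}_M^{k}.$$
   Context: Indices of vectors and matrices start at $0$. $\mathbf{e}_i$ denotes the $i$-th canonical basis vector (of the appropriate dimension), $\mathbf{1}_K$ the all-ones vector of length $K$, $\mathbf{0}_K$ the zero vector, $\mathbf{I}_K$ the identity, $\otimes$ the Kronecker product, $\odot$ the elementwise product, and $\mathrm{vec}$ stacks columns (column-major). $[\mathbf{A}]_{:,n}$ is the $n$-th column of $\mathbf{A}$. $\mathbf{F}_K$ is the unitary $K$-point DFT matrix, $[\mathbf{F}_K]_{p,q}=\frac{1}{\sqrt{K}}e^{-j2\pi pq/K}$. $\mathbf{D}_N$ is diagonal with $[\mathbf{D}_N]_{n,n}=e^{j2\pi n/N}$, $\mathbf{D}_M$ is diagonal with $[\mathbf{D}_M]_{m,m}=e^{j2\pi m/M}$, and $\tilde{\mathbf{D}}_M$ is diagonal with $[\tilde{\mathbf{D}}_M]_{m,m}=e^{j\frac{2\pi}{MN}\frac{mT}{T'}}$ for fixed constants $0<T<T'$. Real powers of these diagonal matrices are taken entrywise on the diagonal (e.g. $[\mathbf{D}_N^{k}]_{n,n}=e^{j2\pi nk/N}$), $\mathbf{d}_M=\mathrm{diag}(\mathbf{D}_M)$,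 $\tilde{\mathbf{d}}_M=\mathrm{diag}(\tilde{\mathbf{D}}_M)$ are the diagonal vectors and vector powers are entrywise. The delay matrix is $\mathbf{C}_M(l)=\mathbf{F}_M^{\mathsf{H}}(\mathbf{D}_M^{*})^{l}\mathbf{F}_M$. $\mathcal{CN}(\mathbf{0},\mathbf{\Sigma})$ is the circularly symmetric complex Gaussian distribution. *)

theory Defs
  imports "HOL-Probability.Probability"
begin

text \<open>Matrices are functions nat => nat => complex, vectors nat => complex;
  dimensions are carried explicitly in the sums. Indices start at 0.\<close>

definition mm :: "nat \<Rightarrow> (nat \<Rightarrow> nat \<Rightarrow> complex) \<Rightarrow> (nat \<Rightarrow> nat \<Rightarrow> complex) \<Rightarrow> nat \<Rightarrow> nat \<Rightarrow> complex"
  where "mm n A B i j = (\<Sum>q<n. A i q * B q j)"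

definition mv :: "nat \<Rightarrow> (nat \<Rightarrow> nat \<Rightarrow> complex) \<Rightarrow> (nat \<Rightarrow> complex) \<Rightarrow> nat \<Rightarrow> complex"
  where "mv n A x i = (\<Sum>q<n. A i q * x q)"

definition diagm :: "(nat \<Rightarrow> complex) \<Rightarrow> nat \<Rightarrow> nat \<Rightarrow> complex"
  where "diagm d i j = (if i = j then d i else 0)"

definition idm :: "nat \<Rightarrow> nat \<Rightarrow> complex"
  where "idm i j = (if i = j then 1 else 0)"

definition ev :: "nat \<Rightarrow> nat \<Rightarrow> complex"
  where "ev i j = (if j = i then 1 else 0)"

text \<open>Kronecker product A (x) B where B has p rows and q columns.\<close>
definition kron :: "nat \<Rightarrow> nat \<Rightarrow> (nat \<Rightarrow> nat \<Rightarrow> complex) \<Rightarrow> (nat \<Rightarrow> nat \<Rightarrow> complex) \<Rightarrow> nat \<Rightarrow> nat \<Rightarrow> complex"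
  where "kron p q A B i j = A (i div p) (j div q) * B (i mod p) (j mod q)"

text \<open>Kronecker product of vectors a (x) b where b has length p.\<close>
definition kronv :: "nat \<Rightarrow> (nat \<Rightarrow> complex) \<Rightarrow> (nat \<Rightarrow> complex) \<Rightarrow> nat \<Rightarrow> complex"
  where "kronv p a b i = a (i div p) * b (i mod p)"

text \<open>column-major vectorisation of an M x N matrix\<close>
definition vecm :: "nat \<Rightarrow> (nat \<Rightarrow> nat \<Rightarrow> complex) \<Rightarrow> nat \<Rightarrow> complex"
  where "vecm M X i = X (i mod M) (i div M)"

definition Fm :: "nat \<Rightarrow> nat \<Rightarrow> nat \<Rightarrow> complex"
  where "Fm K p q = exp (- (2 * pi * \<i> * of_nat p * of_nat q / of_nat K)) / of_real (sqrt (real K))"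

definition FHm :: "nat \<Rightarrow> nat \<Rightarrow> nat \<Rightarrow> complex"
  where "FHm K p q = cnj (Fm K q p)"

text \<open>d_M (diagonal of D_M) raised entrywise to a real power r\<close>
definition dM_pow :: "nat \<Rightarrow> real \<Rightarrow> nat \<Rightarrow> complex"
  where "dM_pow M r m = exp (\<i> * of_real (2 * pi * real m * r / real M))"

definition DN_pow :: "nat \<Rightarrow> real \<Rightarrow> nat \<Rightarrow> nat \<Rightarrow> complex"
  where "DN_pow N k = diagm (dM_pow N k)"

definition DMconj_pow :: "nat \<Rightarrow> real \<Rightarrow> nat \<Rightarrow> nat \<Rightarrow> complex"
  where "DMconj_pow M l = diagm (\<lambda>m. cnj (dM_pow M l m))"

text \<open>tilde d_M raised entrywise to the real power k; T, T' are the fixed constants\<close>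
definition dt_pow :: "nat \<Rightarrow> nat \<Rightarrow> real \<Rightarrow> real \<Rightarrow> real \<Rightarrow> nat \<Rightarrow> complex"
  where "dt_pow M N T T' k m = exp (\<i> * of_real (2 * pi / (real M * real N) * (real m * T / T') * k))"

definition Dt_pow :: "nat \<Rightarrow> nat \<Rightarrow> real \<Rightarrow> real \<Rightarrow> real \<Rightarrow> nat \<Rightarrow> nat \<Rightarrow> complex"
  where "Dt_pow M N T T' k = diagm (dt_pow M N T T' k)"

definition Cm :: "nat \<Rightarrow> real \<Rightarrow> nat \<Rightarrow> nat \<Rightarrow> complex"
  where "Cm M l = mm M (mm M (FHm M) (DMconj_pow M l)) (Fm M)"

definition pilot :: "nat \<Rightarrow> nat \<Rightarrow> nat \<Rightarrow> nat \<Rightarrow> complex"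
  where "pilot M mp np i = kronv M (\<lambda>_. 1) (ev mp) i + kronv M (ev np) (\<lambda>j. 1 - ev mp j) i"

definition Hm :: "nat \<Rightarrow> nat \<Rightarrow> real \<Rightarrow> real \<Rightarrow> real \<Rightarrow> real \<Rightarrow> nat \<Rightarrow> nat \<Rightarrow> complex"
  where "Hm M N T T' l k = kron M M (mm N (mm N (Fm N) (DN_pow N k)) (FHm N))
                                      (mm M (Dt_pow M N T T' k) (Cm M l))"

definition gu :: "nat \<Rightarrow> nat \<Rightarrow> real \<Rightarrow> real \<Rightarrow> nat \<Rightarrow> real \<Rightarrow> real \<Rightarrow> nat \<Rightarrow> complex"
  where "gu M N T T' mp l k m =
     of_nat (N - 1) * mv M (mm M (Dt_pow M N T T' k) (FHm M)) (\<lambda>q. Fm M q mp * dM_pow M (- l) q) m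
     + dt_pow M N T T' k m"

text \<open>scalar circularly symmetric complex Gaussian CN(0,s): real and imaginary parts
  independent N(0, s/2)\<close>
definition cgauss :: "real \<Rightarrow> complex measure"
  where "cgauss s = distr (density lborel (normal_density 0 (sqrt (s/2)))
                            \<Otimes>\<^sub>M density lborel (normal_density 0 (sqrt (s/2))))
                           borel (\<lambda>(a, b). Complex a b)"

text \<open>CN(0_K, s I_K): i.i.d. CN(0,s) entries, as a measure on vectors indexed by {..<K}\<close>
definition cn_iid :: "nat \<Rightarrow> real \<Rightarrow> (nat \<Rightarrow> complex) measure"
  where "cn_iid K s = PiM {..<K} (\<lambda>_. cgauss s)"

definition has_cn_iid :: "'w measure \<Rightarrow> nat \<Rightarrow> real \<Rightarrow> ('w \<Rightarrow> nat \<Rightarrow> complex) \<Rightarrow> bool"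
  where "has_cn_iid P K s z \<longleftrightarrow>
           z \<in> measurable P (PiM {..<K} (\<lambda>_. borel)) \<and>
           distr P (PiM {..<K} (\<lambda>_. borel)) z = cn_iid K s"

end

theory Submission
  imports Defs
begin

text \<open>Every column of \<open>F\<^sub>N diag(d) F\<^sub>N\<^sup>H\<close> and every row of \<open>F\<^sub>M\<^sup>H diag(d) F\<^sub>M\<close> sums to
  \<open>d\<^sub>0\<close>, because \<open>1\<^sup>T F\<^sub>K = \<surd>K e\<^sub>0\<^sup>T\<close>. Hence summing the \<open>N\<close> Doppler blocks of
  \<open>(A \<otimes> B) x\<close> with \<open>A = F\<^sub>N D\<^sub>N\<^sup>k F\<^sub>N\<^sup>H\<close> gives \<open>B\<close> applied to the block sum of \<open>x\<close>,
  and the delay part \<open>B = Dt_pow M N T T' k * Cm M l\<close> maps \<open>1\<^sub>M\<close> to \<open>dt_pow M N T T' k\<close>.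
  The block sum of the pilot is \<open>(N - 1) e\<^sub>m\<^sub>p + 1\<^sub>M\<close>, which yields \<open>g\<^sub>u(l,k)\<close>.

  The averaged noise in delay bin \<open>m\<close> is the mean of the \<open>N\<close> independent \<open>CN(0, s)\<close>
  entries \<open>z\<^sub>n\<^sub>M\<^sub>+\<^sub>m\<close>. Real and imaginary parts of all entries form one independent
  family of real normals, so the mean is \<open>CN(0, s/N)\<close>; distinct bins use disjoint
  sets of entries and are therefore independent.\<close>

section \<open>The discrete Fourier transform and diagonal matrices\<close>

lemma sum_dft_kernel_eq_0:
  assumes "\<not> K dvd q"
  shows "(\<Sum>p<K. exp (- (2 * of_real pi * \<i> * of_nat p * of_nat q / of_nat K))) = (0::complex)"
proof (cases "K = 0")
  case False
  define w :: complex where "w = exp (2 * of_real pi * \<i> * of_nat q / of_nat K)"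
  have powers: "exp (- (2 * of_real pi * \<i> * of_nat p * of_nat q / of_nat K)) = inverse w ^ p" for p
  proof -
    have "- (2 * of_real pi * \<i> * of_nat p * of_nat q / of_nat K)
        = of_nat p * - (2 * of_real pi * \<i> * of_nat q / of_nat K)"
      by (simp add: algebra_simps)
    then show ?thesis
      by (simp only: w_def exp_of_nat_mult exp_minus)
  qed
  have "inverse w ^ K = 1"
    using False by (simp add: w_def power_inverse complex_root_unity)
  moreover have "inverse w \<noteq> 1"
    using False assms by (simp add: w_def complex_root_unity_eq_1)
  ultimately show ?thesis
    unfolding powers using geometric_sum[of "inverse w" K] by simp
qed simp

lemma Fm_commute: "Fm K p q = Fm K q p"
  unfolding Fm_def by (simp add: mult.commute mult.left_commute)

lemma sum_Fm_column:
  assumes "q < K"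
  shows "(\<Sum>p<K. Fm K p q) = (if q = 0 then of_real (sqrt (real K)) else 0)"
proof (cases "q = 0")
  case True
  have "(\<Sum>p<K. Fm K p q) = of_real (real K / sqrt (real K))"
    using True by (simp add: Fm_def)
  then show ?thesis
    using True by (simp add: real_div_sqrt)
next
  case False
  with assms have "\<not> K dvd q"
    using nat_dvd_not_less by blast
  then show ?thesis
    using False by (simp add: Fm_def sum_divide_distrib[symmetric] sum_dft_kernel_eq_0)
qed

lemma sum_Fm_row: "q < K \<Longrightarrow> (\<Sum>p<K. Fm K q p) = (if q = 0 then of_real (sqrt (real K)) else 0)"
  unfolding sum_Fm_column[symmetric] by (intro sum.cong refl Fm_commute)

lemma mm_diagm_left: "i < n \<Longrightarrow> mm n (diagm d) A i j = d i * A i j"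
  by (simp add: mm_def diagm_def if_distrib[where f="\<lambda>x. x * _"] cong: if_cong)

lemma mm_diagm_right: "j < n \<Longrightarrow> mm n A (diagm d) i j = A i j * d j"
  by (simp add: mm_def diagm_def if_distrib[where f="\<lambda>x. _ * x"] cong: if_cong)

lemma mm_mm_diagm: "mm n (mm n A (diagm d)) B i j = (\<Sum>q<n. A i q * d q * B q j)"
  by (simp add: mm_def[of n _ B] mm_diagm_right)

lemma sum_column_Fm_diagm_FHm:
  assumes "q < K"
  shows "(\<Sum>p<K. mm K (mm K (Fm K) (diagm d)) (FHm K) p q) = d 0"
proof -
  have "(\<Sum>p<K. mm K (mm K (Fm K) (diagm d)) (FHm K) p q)
      = (\<Sum>r<K. (\<Sum>p<K. Fm K p r) * d r * FHm K r q)"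
    unfolding mm_mm_diagm by (subst sum.swap) (simp add: sum_distrib_right)
  also have "\<dots> = of_real (sqrt (real K)) * d 0 * FHm K 0 q"
    using assms by (simp add: sum_Fm_column if_distrib[where f="\<lambda>x. x * _"] cong: if_cong)
  also have "\<dots> = d 0"
    using assms by (simp add: FHm_def Fm_def)
  finally show ?thesis .
qed

lemma sum_row_FHm_diagm_Fm:
  assumes "p < K"
  shows "(\<Sum>q<K. mm K (mm K (FHm K) (diagm d)) (Fm K) p q) = d 0"
proof -
  have "(\<Sum>q<K. mm K (mm K (FHm K) (diagm d)) (Fm K) p q)
      = (\<Sum>r<K. FHm K p r * d r * (\<Sum>q<K. Fm K r q))"
    unfolding mm_mm_diagm by (subst sum.swap) (simp add: sum_distrib_left)
  also have "\<dots> = FHm K p 0 * d 0 * of_real (sqrt (real K))"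
    using assms by (simp add: sum_Fm_row if_distrib[where f="\<lambda>x. _ * x"] cong: if_cong)
  also have "\<dots> = d 0"
    using assms by (simp add: FHm_def Fm_def)
  finally show ?thesis .
qed

section \<open>Block sums and Kronecker products\<close>

text \<open>\<open>block_sum M N x = (1\<^sub>N\<^sup>T \<otimes> I\<^sub>M) x\<close>: in the column-major vectorisation of an
  \<open>M \<times> N\<close> matrix, index \<open>n * M + r\<close> holds row \<open>r\<close> of column \<open>n\<close>.\<close>

definition block_sum :: "nat \<Rightarrow> nat \<Rightarrow> (nat \<Rightarrow> 'a::comm_monoid_add) \<Rightarrow> nat \<Rightarrow> 'a"
  where "block_sum M N x r = (\<Sum>n<N. x (n * M + r))"

lemma sum_lessThan_mult_blocks:
  fixes f :: "nat \<Rightarrow> 'a::comm_monoid_add"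
  shows "(\<Sum>i<M * N. f i) = (\<Sum>n<N. \<Sum>r<M. f (n * M + r))"
proof -
  have "(\<Sum>i<M * N. f i) = (\<Sum>n<N. sum f {n * M..<n * M + M})"
    using sum.nat_group[of f M N] by (simp add: mult.commute)
  also have "\<dots> = (\<Sum>n<N. \<Sum>r<M. f (n * M + r))"
  proof (rule sum.cong[OF refl])
    fix n
    have "sum f {n * M..<n * M + M} = sum f {0 + n * M..<M + n * M}"
      by (simp add: add.commute)
    also have "\<dots> = (\<Sum>r<M. f (r + n * M))"
      by (simp only: sum.shift_bounds_nat_ivl atLeast0LessThan)
    finally show "sum f {n * M..<n * M + M} = (\<Sum>r<M. f (n * M + r))"
      by (simp add: add.commute)
  qed
  finally show ?thesis .
qed

lemma mv_kron:
  "mv (M * N) (kron M M A B) x i = (\<Sum>n<N. A (i div M) n * (\<Sum>r<M. B (i mod M) r * x (n * M + r)))"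
  unfolding mv_def sum_lessThan_mult_blocks
  by (intro sum.cong refl) (simp add: kron_def sum_distrib_left mult.assoc)

lemma mv_kron_ones_idm:
  assumes "m < M"
  shows "mv (M * N) (kron M M (\<lambda>_ _. 1) idm) x m = block_sum M N x m"
  using assms by (simp add: mv_kron block_sum_def idm_def if_distrib[where f="\<lambda>y. y * _"] cong: if_cong)

lemma block_sum_mv_kron:
  assumes "m < M" and column_sums: "\<And>n'. n' < N \<Longrightarrow> (\<Sum>n<N. A n n') = c"
  shows "block_sum M N (mv (M * N) (kron M M A B) x) m = c * mv M B (block_sum M N x) m"
proof -
  have "block_sum M N (mv (M * N) (kron M M A B) x) m
      = (\<Sum>n'<N. (\<Sum>n<N. A n n') * (\<Sum>r<M. B m r * x (n' * M + r)))"
    using assms(1) unfolding block_sum_def mv_kron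
    by (subst sum.swap) (simp add: sum_distrib_right)
  also have "\<dots> = c * (\<Sum>r<M. B m r * (\<Sum>n'<N. x (n' * M + r)))"
    by (simp add: column_sums sum_distrib_left sum.swap[of _ "{..<N}"])
  finally show ?thesis
    by (simp add: mv_def block_sum_def)
qed

lemma block_sum_add_scaled:
  fixes x y :: "nat \<Rightarrow> 'a::semiring_0"
  shows "block_sum M N (\<lambda>i. a * x i + y i) r = a * block_sum M N x r + block_sum M N y r"
  by (simp add: block_sum_def sum.distrib sum_distrib_left)

definition block_indices :: "nat \<Rightarrow> nat \<Rightarrow> nat \<Rightarrow> nat set"
  where "block_indices M N r = (\<lambda>n. n * M + r) ` {..<N}"

lemma block_sum_eq_sum_block_indices: "0 < M \<Longrightarrow> block_sum M N x r = sum x (block_indices M N r)"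
  by (simp add: block_sum_def block_indices_def sum.reindex inj_on_def)

lemma card_block_indices: "0 < M \<Longrightarrow> card (block_indices M N r) = N"
  by (simp add: block_indices_def card_image inj_on_def)

lemma block_indices_subset:
  assumes "r < M"
  shows "block_indices M N r \<subseteq> {..<M * N}"
proof
  fix i assume "i \<in> block_indices M N r"
  then obtain n where n: "n < N" "i = n * M + r"
    by (auto simp: block_indices_def)
  with assms have "i < (n + 1) * M"
    by simp
  also have "\<dots> \<le> N * M"
    using n by (intro mult_right_mono) auto
  finally show "i \<in> {..<M * N}"
    by (simp add: mult.commute)
qed

lemma disjoint_family_on_block_indices: "disjoint_family_on (block_indices M N) {..<M}"
  by (auto simp: disjoint_family_on_def block_indices_def) (metis mod_mult_self3 mod_less)+

section \<open>The delay-Doppler channel\<close>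

lemma block_sum_Hm:
  assumes "m < M"
  shows "block_sum M N (mv (M * N) (Hm M N T T' l k) x) m
       = mv M (mm M (Dt_pow M N T T' k) (Cm M l)) (block_sum M N x) m"
proof -
  have "(\<Sum>n<N. mm N (mm N (Fm N) (DN_pow N k)) (FHm N) n n') = 1" if "n' < N" for n'
    using that by (simp add: DN_pow_def sum_column_Fm_diagm_FHm dM_pow_def)
  then show ?thesis
    unfolding Hm_def using block_sum_mv_kron[OF assms] by simp
qed

lemma sum_row_Dt_Cm:
  assumes "m < M"
  shows "(\<Sum>r<M. mm M (Dt_pow M N T T' k) (Cm M l) m r) = dt_pow M N T T' k m"
  using assms sum_row_FHm_diagm_Fm[OF assms, of "\<lambda>q. cnj (dM_pow M l q)"]
  by (simp add: Dt_pow_def mm_diagm_left Cm_def DMconj_pow_def dM_pow_def sum_distrib_left[symmetric])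

lemma Dt_Cm_column:
  assumes "m < M"
  shows "mm M (Dt_pow M N T T' k) (Cm M l) m mp
       = mv M (mm M (Dt_pow M N T T' k) (FHm M)) (\<lambda>q. Fm M q mp * dM_pow M (- l) q) m"
proof -
  have "cnj (dM_pow M l q) = dM_pow M (- l) q" for q
    by (simp add: dM_pow_def exp_cnj)
  then show ?thesis
    using assms by (simp add: Dt_pow_def mm_diagm_left Cm_def DMconj_pow_def mm_mm_diagm mv_def
        sum_distrib_left mult_ac)
qed

lemma block_sum_pilot:
  assumes "r < M" "np < N"
  shows "block_sum M N (pilot M mp np) r = of_nat (N - 1) * ev mp r + 1"
proof -
  have "block_sum M N (pilot M mp np) r = (\<Sum>n<N. ev mp r + ev np n * (1 - ev mp r))"
    using assms by (simp add: block_sum_def pilot_def kronv_def)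
  also have "\<dots> = of_nat N * ev mp r + (1 - ev mp r)"
    using assms by (simp add: sum.distrib sum_distrib_right[symmetric] ev_def)
  also have "\<dots> = of_nat (N - 1) * ev mp r + 1"
    using assms by (simp add: algebra_simps)
  finally show ?thesis .
qed

lemma mv_Dt_Cm_block_sum_pilot:
  assumes "m < M" "mp < M" "np < N"
  shows "mv M (mm M (Dt_pow M N T T' k) (Cm M l)) (block_sum M N (pilot M mp np)) m
       = gu M N T T' mp l k m"
proof -
  let ?B = "mm M (Dt_pow M N T T' k) (Cm M l)"
  have "mv M ?B (block_sum M N (pilot M mp np)) m
      = (\<Sum>r<M. of_nat (N - 1) * (?B m r * ev mp r) + ?B m r)"
    unfolding mv_def using assms
    by (intro sum.cong refl) (simp add: block_sum_pilot distrib_left mult.left_commute)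
  also have "\<dots> = of_nat (N - 1) * (\<Sum>r<M. ?B m r * ev mp r) + (\<Sum>r<M. ?B m r)"
    by (simp add: sum.distrib sum_distrib_left)
  also have "(\<Sum>r<M. ?B m r * ev mp r) = ?B m mp"
    using assms by (simp add: ev_def if_distrib[where f="\<lambda>x. _ * x"] cong: if_cong)
  finally show ?thesis
    using assms by (simp add: gu_def sum_row_Dt_Cm Dt_Cm_column[symmetric])
qed

lemma block_sum_noiseless_output:
  fixes Es Ep :: real and Xd :: "nat \<Rightarrow> nat \<Rightarrow> complex"
  assumes "m < M" "mp < M" "np < N"
  defines "x \<equiv> \<lambda>i. of_real (sqrt Es) * vecm M Xd i + of_real (sqrt Ep) * pilot M mp np i"
  shows "block_sum M N (mv (M * N) (Hm M N T T' l k) x) m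
       = of_real (sqrt Ep) * gu M N T T' mp l k m
         + of_real (sqrt Es) * mv M (mm M (Dt_pow M N T T' k) (Cm M l)) (\<lambda>q. \<Sum>n<N. Xd q n) m"
proof -
  let ?B = "mm M (Dt_pow M N T T' k) (Cm M l)"
  have "block_sum M N x r
      = of_real (sqrt Es) * (\<Sum>n<N. Xd r n) + of_real (sqrt Ep) * block_sum M N (pilot M mp np) r"
    if "r < M" for r
    using that by (simp add: x_def block_sum_def sum.distrib sum_distrib_left vecm_def)
  then have "mv M ?B (block_sum M N x) m
      = (\<Sum>r<M. of_real (sqrt Es) * (?B m r * (\<Sum>n<N. Xd r n))
                + of_real (sqrt Ep) * (?B m r * block_sum M N (pilot M mp np) r))"
    unfolding mv_def by (intro sum.cong refl) (simp add: distrib_left mult.left_commute)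
  also have "\<dots> = of_real (sqrt Es) * mv M ?B (\<lambda>q. \<Sum>n<N. Xd q n) m
        + of_real (sqrt Ep) * mv M ?B (block_sum M N (pilot M mp np)) m"
    unfolding mv_def by (simp only: sum.distrib sum_distrib_left)
  finally show ?thesis
    using assms by (simp add: block_sum_Hm mv_Dt_Cm_block_sum_pilot)
qed

section \<open>Circularly symmetric complex Gaussian vectors\<close>

lemma (in sigma_finite_measure) distr_pair_snd:
  assumes "prob_space N"
  shows "distr (N \<Otimes>\<^sub>M M) M snd = M"
proof (intro measure_eqI)
  fix A assume A: "A \<in> sets (distr (N \<Otimes>\<^sub>M M) M snd)"
  then have "emeasure (distr (N \<Otimes>\<^sub>M M) M snd) A = emeasure (N \<Otimes>\<^sub>M M) (space N \<times> A)"
    by (auto simp: emeasure_distr space_pair_measure dest: sets.sets_into_space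
        intro!: arg_cong2[where f=emeasure])
  with A show "emeasure (distr (N \<Otimes>\<^sub>M M) M snd) A = emeasure M A"
    by (simp add: emeasure_pair_measure_Times prob_space.emeasure_space_1[OF assms])
qed simp

lemma (in prob_space) distr_pair_eq_pair_measure_iff:
  assumes X: "random_variable S X" and Y: "random_variable T Y"
    and A: "prob_space A" "sets A = sets S" and B: "prob_space B" "sets B = sets T"
  shows "distr M (S \<Otimes>\<^sub>M T) (\<lambda>\<omega>. (X \<omega>, Y \<omega>)) = A \<Otimes>\<^sub>M B
     \<longleftrightarrow> indep_var S X T Y \<and> distr M S X = A \<and> distr M T Y = B"
proof
  assume joint: "distr M (S \<Otimes>\<^sub>M T) (\<lambda>\<omega>. (X \<omega>, Y \<omega>)) = A \<Otimes>\<^sub>M B"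
  have "distr M S X = distr (distr M (S \<Otimes>\<^sub>M T) (\<lambda>\<omega>. (X \<omega>, Y \<omega>))) S fst"
    using X Y by (subst distr_distr) (auto simp: comp_def)
  also have "\<dots> = distr (A \<Otimes>\<^sub>M B) A fst"
    unfolding joint using A by (intro distr_cong) auto
  also have "\<dots> = A"
    using B by (simp add: prob_space.distr_pair_fst)
  finally have dX: "distr M S X = A" .
  have "distr M T Y = distr (distr M (S \<Otimes>\<^sub>M T) (\<lambda>\<omega>. (X \<omega>, Y \<omega>))) T snd"
    using X Y by (subst distr_distr) (auto simp: comp_def)
  also have "\<dots> = distr (A \<Otimes>\<^sub>M B) B snd"
    unfolding joint using B by (intro distr_cong) auto
  also have "\<dots> = B"
    using A B by (simp add: sigma_finite_measure.distr_pair_snd prob_space_imp_sigma_finite)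
  finally have dY: "distr M T Y = B" .
  show "indep_var S X T Y \<and> distr M S X = A \<and> distr M T Y = B"
    using X Y joint dX dY by (simp add: indep_var_distribution_eq)
qed (auto simp: indep_var_distribution_eq)

lemma measurable_Complex[measurable (raw)]:
  assumes "f \<in> borel_measurable M" "g \<in> borel_measurable M"
  shows "(\<lambda>x. Complex (f x) (g x)) \<in> borel_measurable M"
  using assms by (simp add: Complex_eq)

lemma prob_space_cgauss: "0 < s \<Longrightarrow> prob_space (cgauss s)"
  unfolding cgauss_def
  by (intro prob_space.prob_space_distr prob_space_pair prob_space_normal_density) auto

lemma (in prob_space) distr_eq_cgauss_iff:
  assumes X: "X \<in> borel_measurable M" and s: "0 < s"
  shows "distr M borel X = cgauss s \<longleftrightarrow>
           indep_var borel (\<lambda>\<omega>. Re (X \<omega>)) borel (\<lambda>\<omega>. Im (X \<omega>)) \<and>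
           distributed M lborel (\<lambda>\<omega>. Re (X \<omega>)) (normal_density 0 (sqrt (s / 2))) \<and>
           distributed M lborel (\<lambda>\<omega>. Im (X \<omega>)) (normal_density 0 (sqrt (s / 2)))"
proof -
  define G where "G = density lborel (normal_density 0 (sqrt (s / 2)))"
  have G: "prob_space G" "sets G = sets borel"
    using s by (auto simp: G_def intro: prob_space_normal_density)
  note [measurable_cong] = G(2)
  have distributed_iff: "distributed M lborel f (normal_density 0 (sqrt (s / 2))) \<longleftrightarrow> distr M borel f = G"
    if "f \<in> borel_measurable M" for f
  proof -
    have "distr M lborel f = distr M borel f"
      by (rule distr_cong) auto
    then show ?thesis
      using that by (simp add: distributed_def G_def)
  qed
  let ?ReIm = "\<lambda>\<omega>. (Re (X \<omega>), Im (X \<omega>))"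
  have "distr M borel X = cgauss s \<longleftrightarrow> distr M (borel \<Otimes>\<^sub>M borel) ?ReIm = G \<Otimes>\<^sub>M G"
  proof
    assume law: "distr M borel X = cgauss s"
    have "distr M (borel \<Otimes>\<^sub>M borel) ?ReIm = distr (distr M borel X) (borel \<Otimes>\<^sub>M borel) (\<lambda>c. (Re c, Im c))"
      using X by (subst distr_distr) (auto simp: comp_def)
    also have "\<dots> = distr (G \<Otimes>\<^sub>M G) (borel \<Otimes>\<^sub>M borel) ((\<lambda>c. (Re c, Im c)) \<circ> (\<lambda>(a, b). Complex a b))"
      unfolding law cgauss_def G_def[symmetric] by (subst distr_distr) auto
    also have "\<dots> = distr (G \<Otimes>\<^sub>M G) (G \<Otimes>\<^sub>M G) (\<lambda>x. x)"
      using G by (intro distr_cong sets_pair_measure_cong) auto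
    finally show "distr M (borel \<Otimes>\<^sub>M borel) ?ReIm = G \<Otimes>\<^sub>M G"
      by simp
  next
    assume "distr M (borel \<Otimes>\<^sub>M borel) ?ReIm = G \<Otimes>\<^sub>M G"
    moreover have "distr M borel X = distr (distr M (borel \<Otimes>\<^sub>M borel) ?ReIm) borel (\<lambda>(a, b). Complex a b)"
      using X by (subst distr_distr) (auto simp: comp_def)
    ultimately show "distr M borel X = cgauss s"
      by (simp add: cgauss_def G_def)
  qed
  also have "\<dots> \<longleftrightarrow> indep_var borel (\<lambda>\<omega>. Re (X \<omega>)) borel (\<lambda>\<omega>. Im (X \<omega>)) \<and>
      distr M borel (\<lambda>\<omega>. Re (X \<omega>)) = G \<and> distr M borel (\<lambda>\<omega>. Im (X \<omega>)) = G"
    using X G by (intro distr_pair_eq_pair_measure_iff) auto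
  finally show ?thesis
    using X by (simp add: distributed_iff)
qed

lemma (in prob_space) has_cn_iid_iff:
  assumes z: "z \<in> measurable M (\<Pi>\<^sub>M i\<in>{..<K}. borel)" and "0 < K" "0 < s"
  shows "has_cn_iid M K s z \<longleftrightarrow>
           indep_vars (\<lambda>_. borel) (\<lambda>i \<omega>. z \<omega> i) {..<K} \<and> (\<forall>i<K. distr M borel (\<lambda>\<omega>. z \<omega> i) = cgauss s)"
proof -
  have components: "(\<lambda>\<omega>. z \<omega> i) \<in> borel_measurable M" if "i < K" for i
    using that by (intro measurable_compose[OF z measurable_component_singleton]) auto
  have "distr M (\<Pi>\<^sub>M i\<in>{..<K}. borel) (\<lambda>\<omega>. \<lambda>i\<in>{..<K}. z \<omega> i) = distr M (\<Pi>\<^sub>M i\<in>{..<K}. borel) z"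
  proof (rule distr_cong)
    fix \<omega> assume "\<omega> \<in> space M"
    then have "z \<omega> \<in> extensional {..<K}"
      using z by (auto simp: measurable_def space_PiM PiE_def)
    then show "(\<lambda>i\<in>{..<K}. z \<omega> i) = z \<omega>"
      by (simp add: restrict_def extensional_def fun_eq_iff)
  qed auto
  then have indep_iff: "indep_vars (\<lambda>_. borel) (\<lambda>i \<omega>. z \<omega> i) {..<K} \<longleftrightarrow>
      distr M (\<Pi>\<^sub>M i\<in>{..<K}. borel) z = (\<Pi>\<^sub>M i\<in>{..<K}. distr M borel (\<lambda>\<omega>. z \<omega> i))"
    using assms components by (subst indep_vars_iff_distr_eq_PiM') auto
  show ?thesis
  proof
    assume "has_cn_iid M K s z"
    then have law: "distr M (\<Pi>\<^sub>M i\<in>{..<K}. borel) z = (\<Pi>\<^sub>M i\<in>{..<K}. cgauss s)"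
      by (simp add: has_cn_iid_def cn_iid_def)
    have marginals: "distr M borel (\<lambda>\<omega>. z \<omega> i) = cgauss s" if "i < K" for i
    proof -
      have "distr M borel (\<lambda>\<omega>. z \<omega> i) = distr (\<Pi>\<^sub>M i\<in>{..<K}. cgauss s) (cgauss s) (\<lambda>x. x i)"
        using z that unfolding law[symmetric]
        by (subst distr_distr) (auto simp: comp_def cgauss_def intro!: distr_cong)
      also have "\<dots> = cgauss s"
        using that \<open>0 < s\<close> by (intro distr_PiM_component prob_space_cgauss) auto
      finally show ?thesis .
    qed
    then show "indep_vars (\<lambda>_. borel) (\<lambda>i \<omega>. z \<omega> i) {..<K} \<and> (\<forall>i<K. distr M borel (\<lambda>\<omega>. z \<omega> i) = cgauss s)"
      using law by (auto simp: indep_iff intro!: PiM_cong)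
  next
    assume "indep_vars (\<lambda>_. borel) (\<lambda>i \<omega>. z \<omega> i) {..<K} \<and> (\<forall>i<K. distr M borel (\<lambda>\<omega>. z \<omega> i) = cgauss s)"
    then show "has_cn_iid M K s z"
      using z by (auto simp: indep_iff has_cn_iid_def cn_iid_def intro!: PiM_cong)
  qed
qed

lemma sets_borel_Re_Im_rectangle:
  assumes "A \<in> sets borel" "B \<in> sets borel"
  shows "{c::complex. Re c \<in> A \<and> Im c \<in> B} \<in> sets borel"
proof -
  have "(\<lambda>c::complex. (Re c, Im c)) -` (A \<times> B) \<inter> space borel \<in> sets borel"
    using assms by (intro measurable_sets[of _ borel "borel \<Otimes>\<^sub>M borel"]) auto
  then show ?thesis
    by (simp add: vimage_def)
qed

lemma (in prob_space) indep_vars_Re_Im: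
  fixes Z :: "'i \<Rightarrow> 'a \<Rightarrow> complex"
  assumes indep: "indep_vars (\<lambda>_. borel) Z I" and I: "finite I" "I \<noteq> {}"
    and Re_Im: "\<And>i. i \<in> I \<Longrightarrow> indep_var borel (\<lambda>\<omega>. Re (Z i \<omega>)) borel (\<lambda>\<omega>. Im (Z i \<omega>))"
  shows "indep_vars (\<lambda>_. borel) (\<lambda>(i, b) \<omega>. if b then Re (Z i \<omega>) else Im (Z i \<omega>)) (I \<times> UNIV)"
proof -
  define \<xi> where "\<xi> = (\<lambda>(i, b) \<omega>. if b then Re (Z i \<omega>) else Im (Z i \<omega>))"
  have Z: "i \<in> I \<Longrightarrow> Z i \<in> borel_measurable M" for i
    using indep by (simp add: indep_vars_def)
  have "indep_vars (\<lambda>_. borel) \<xi> (I \<times> UNIV)"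
  proof (subst indep_vars_finite[where E = "\<lambda>_. sets borel"])
    show "j \<in> I \<times> UNIV \<Longrightarrow> random_variable borel (\<xi> j)" for j
      using Z by (cases j) (auto simp: \<xi>_def)
    show "\<forall>A\<in>(\<Pi> j\<in>I \<times> UNIV. sets borel).
        prob (\<Inter>j\<in>I \<times> UNIV. \<xi> j -` A j \<inter> space M) = (\<Prod>j\<in>I \<times> UNIV. prob (\<xi> j -` A j \<inter> space M))"
    proof
      fix A :: "'i \<times> bool \<Rightarrow> real set" assume A: "A \<in> (\<Pi> j\<in>I \<times> UNIV. sets borel)"
      define B where "B i = {c. Re c \<in> A (i, True) \<and> Im c \<in> A (i, False)}" for i
      have B: "B i \<in> sets borel" if "i \<in> I" for i
        using A that unfolding B_def by (intro sets_borel_Re_Im_rectangle) auto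
      have "(\<Inter>j\<in>I \<times> UNIV. \<xi> j -` A j \<inter> space M) = (\<Inter>i\<in>I. Z i -` B i \<inter> space M)"
        using I by (auto simp: \<xi>_def B_def) (metis (full_types))+
      then have "prob (\<Inter>j\<in>I \<times> UNIV. \<xi> j -` A j \<inter> space M) = (\<Prod>i\<in>I. prob (Z i -` B i \<inter> space M))"
        using indep_varsD_finite[OF indep I(2,1) B] by simp
      also have "\<dots> = (\<Prod>i\<in>I. \<Prod>b\<in>UNIV. prob (\<xi> (i, b) -` A (i, b) \<inter> space M))"
      proof (rule prod.cong[OF refl])
        fix i assume i: "i \<in> I"
        then have "A (i, True) \<in> sets borel" "A (i, False) \<in> sets borel"
          using A by auto
        from indep_varD[OF Re_Im[OF i] this]
        have "prob (Z i -` B i \<inter> space M)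
            = prob ((\<lambda>\<omega>. Re (Z i \<omega>)) -` A (i, True) \<inter> space M) * prob ((\<lambda>\<omega>. Im (Z i \<omega>)) -` A (i, False) \<inter> space M)"
          by (simp add: B_def vimage_def)
        then show "prob (Z i -` B i \<inter> space M) = (\<Prod>b\<in>UNIV. prob (\<xi> (i, b) -` A (i, b) \<inter> space M))"
          by (simp add: UNIV_bool \<xi>_def)
      qed
      also have "\<dots> = (\<Prod>j\<in>I \<times> UNIV. prob (\<xi> j -` A j \<inter> space M))"
        by (simp add: prod.cartesian_product case_prod_beta')
      finally show "prob (\<Inter>j\<in>I \<times> UNIV. \<xi> j -` A j \<inter> space M) = (\<Prod>j\<in>I \<times> UNIV. prob (\<xi> j -` A j \<inter> space M))" .
    qed
  qed (use I sets.sigma_sets_eq[of borel] in \<open>auto simp: Int_stable_def\<close>)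
  then show ?thesis
    by (simp add: \<xi>_def)
qed

lemma (in prob_space) indep_vars_sum_blocks:
  fixes X :: "'i \<Rightarrow> 'a \<Rightarrow> 'b::{second_countable_topology, topological_comm_monoid_add}"
  assumes indep: "indep_vars (\<lambda>_. borel) X I"
    and blocks: "\<And>j. j \<in> L \<Longrightarrow> B j \<subseteq> I" "disjoint_family_on B L"
  shows "indep_vars (\<lambda>_. borel) (\<lambda>j \<omega>. \<Sum>i\<in>B j. X i \<omega>) L"
proof -
  have "(\<lambda>f :: 'i \<Rightarrow> 'b. \<Sum>i\<in>B j. f i) \<in> borel_measurable (\<Pi>\<^sub>M i\<in>B j. borel)" for j
    by (rule borel_measurable_sum[where f="\<lambda>i f. f i"]) (rule measurable_component_singleton)
  from indep_vars_compose2[OF indep_vars_restrict[OF indep blocks] this]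
  show ?thesis
    by (rule iffD1[OF indep_vars_cong, rotated -1]) auto
qed

lemma (in prob_space) indep_var_sum_Re_sum_Im:
  fixes Z :: "'i \<Rightarrow> 'a \<Rightarrow> complex"
  assumes indep: "indep_vars (\<lambda>_. borel) Z I" and I: "finite I" "I \<noteq> {}"
    and Re_Im: "\<And>i. i \<in> I \<Longrightarrow> indep_var borel (\<lambda>\<omega>. Re (Z i \<omega>)) borel (\<lambda>\<omega>. Im (Z i \<omega>))"
  shows "indep_var borel (\<lambda>\<omega>. \<Sum>i\<in>I. Re (Z i \<omega>)) borel (\<lambda>\<omega>. \<Sum>i\<in>I. Im (Z i \<omega>))"
proof -
  define \<xi> where "\<xi> = (\<lambda>(i, b) \<omega>. if b then Re (Z i \<omega>) else Im (Z i \<omega>))"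
  have blocks: "indep_vars (\<lambda>_. borel) (\<lambda>b \<omega>. \<Sum>j\<in>I \<times> {b}. \<xi> j \<omega>) UNIV"
    unfolding \<xi>_def
    by (rule indep_vars_sum_blocks[OF indep_vars_Re_Im[OF assms]]) (auto simp: disjoint_family_on_def)
  have sums: "(\<Sum>j\<in>I \<times> {b}. \<xi> j \<omega>) = (if b then \<Sum>i\<in>I. Re (Z i \<omega>) else \<Sum>i\<in>I. Im (Z i \<omega>))"
    for b \<omega>
  proof -
    have "(\<Sum>j\<in>I \<times> {b}. \<xi> j \<omega>) = (\<Sum>i\<in>I. \<xi> (i, b) \<omega>)"
      by (simp add: sum.cartesian_product[symmetric, where B="{b}" and g="\<lambda>i b. \<xi> (i, b) \<omega>", simplified])
    then show ?thesis
      by (simp add: \<xi>_def)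
  qed
  from blocks show ?thesis
    unfolding indep_var_def by (rule iffD1[OF indep_vars_cong, rotated -1]) (auto simp: sums split: bool.split)
qed

lemma (in prob_space) distr_sum_cgauss:
  assumes I: "finite I" "I \<noteq> {}" and indep: "indep_vars (\<lambda>_. borel) Z I"
    and law: "\<And>i. i \<in> I \<Longrightarrow> distr M borel (Z i) = cgauss (s i)"
    and pos: "\<And>i. i \<in> I \<Longrightarrow> 0 < s i"
  shows "distr M borel (\<lambda>\<omega>. \<Sum>i\<in>I. Z i \<omega>) = cgauss (\<Sum>i\<in>I. s i)"
proof -
  have Z: "Z i \<in> borel_measurable M" if "i \<in> I" for i
    using indep that by (simp add: indep_vars_def)
  have parts: "indep_var borel (\<lambda>\<omega>. Re (Z i \<omega>)) borel (\<lambda>\<omega>. Im (Z i \<omega>)) \<and>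
      distributed M lborel (\<lambda>\<omega>. Re (Z i \<omega>)) (normal_density 0 (sqrt (s i / 2))) \<and>
      distributed M lborel (\<lambda>\<omega>. Im (Z i \<omega>)) (normal_density 0 (sqrt (s i / 2)))" if "i \<in> I" for i
    using distr_eq_cgauss_iff[OF Z[OF that] pos[OF that]] law[OF that] by simp
  have normal_sum: "distributed M lborel (\<lambda>\<omega>. \<Sum>i\<in>I. f (Z i \<omega>)) (normal_density 0 (sqrt ((\<Sum>i\<in>I. s i) / 2)))"
    if f: "f = Re \<or> f = Im" for f
  proof -
    have "indep_vars (\<lambda>_. borel) (\<lambda>i \<omega>. f (Z i \<omega>)) I"
      using f by (intro indep_vars_compose2[OF indep]) auto
    moreover have "distributed M lborel (\<lambda>\<omega>. f (Z i \<omega>)) (normal_density 0 (sqrt (s i / 2)))" if "i \<in> I" for i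
      using parts[OF that] f by auto
    ultimately have "distributed M lborel (\<lambda>\<omega>. \<Sum>i\<in>I. f (Z i \<omega>))
        (normal_density (\<Sum>i\<in>I. 0) (sqrt (\<Sum>i\<in>I. (sqrt (s i / 2))\<^sup>2)))"
      using I pos by (intro sum_indep_normal) auto
    then show ?thesis
      using pos by (simp add: sum_divide_distrib less_imp_le)
  qed
  have "indep_var borel (\<lambda>\<omega>. \<Sum>i\<in>I. Re (Z i \<omega>)) borel (\<lambda>\<omega>. \<Sum>i\<in>I. Im (Z i \<omega>))"
    using parts by (intro indep_var_sum_Re_sum_Im[OF indep I]) auto
  moreover have "0 < (\<Sum>i\<in>I. s i)"
    using I pos by (intro sum_pos) auto
  ultimately show ?thesis
    using normal_sum Z I by (subst distr_eq_cgauss_iff) auto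
qed

lemma (in prob_space) distr_scale_cgauss:
  assumes X: "X \<in> borel_measurable M" and law: "distr M borel X = cgauss s"
    and s: "0 < s" and c: "c \<noteq> 0"
  shows "distr M borel (\<lambda>\<omega>. of_real c * X \<omega>) = cgauss (c\<^sup>2 * s)"
proof -
  have parts: "indep_var borel (\<lambda>\<omega>. Re (X \<omega>)) borel (\<lambda>\<omega>. Im (X \<omega>)) \<and>
      distributed M lborel (\<lambda>\<omega>. Re (X \<omega>)) (normal_density 0 (sqrt (s / 2))) \<and>
      distributed M lborel (\<lambda>\<omega>. Im (X \<omega>)) (normal_density 0 (sqrt (s / 2)))"
    using distr_eq_cgauss_iff[OF X s] law by simp
  have sd: "\<bar>c\<bar> * sqrt (s / 2) = sqrt (c\<^sup>2 * s / 2)"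
    by (metis real_sqrt_abs real_sqrt_mult times_divide_eq_right)
  have "distributed M lborel (\<lambda>\<omega>. 0 + c * f (X \<omega>)) (normal_density (0 + c * 0) (\<bar>c\<bar> * sqrt (s / 2)))"
    if "f = Re \<or> f = Im" for f
    using that parts s c by (intro normal_density_affine) auto
  moreover have "indep_var borel (\<lambda>\<omega>. c * Re (X \<omega>)) borel (\<lambda>\<omega>. c * Im (X \<omega>))"
    using parts by (intro indep_var_compose[unfolded comp_def, of _ _ _ _ _ borel _ borel]) auto
  ultimately show ?thesis
    using X s c by (subst distr_eq_cgauss_iff) (auto simp: sd)
qed

lemma (in prob_space) distr_mean_cgauss:
  assumes I: "finite I" "I \<noteq> {}" and indep: "indep_vars (\<lambda>_. borel) Z I"
    and law: "\<And>i. i \<in> I \<Longrightarrow> distr M borel (Z i) = cgauss s" and s: "0 < s"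
  shows "distr M borel (\<lambda>\<omega>. (\<Sum>i\<in>I. Z i \<omega>) / of_nat (card I)) = cgauss (s / card I)"
proof -
  have "(\<lambda>\<omega>. \<Sum>i\<in>I. Z i \<omega>) \<in> borel_measurable M"
    using indep by (intro borel_measurable_sum) (auto simp: indep_vars_def)
  moreover have "distr M borel (\<lambda>\<omega>. \<Sum>i\<in>I. Z i \<omega>) = cgauss (card I * s)"
    using distr_sum_cgauss[OF I indep law s] by simp
  ultimately have "distr M borel (\<lambda>\<omega>. of_real (1 / card I) * (\<Sum>i\<in>I. Z i \<omega>)) = cgauss ((1 / card I)\<^sup>2 * (card I * s))"
    using I s by (intro distr_scale_cgauss) (auto simp: card_gt_0_iff)
  then show ?thesis
    using I by (simp add: power2_eq_square field_simps)
qed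

lemma (in prob_space) has_cn_iid_block_mean:
  assumes K: "0 < K" and N: "0 < N" and s: "0 < s" and z: "has_cn_iid M (K * N) s z"
  shows "has_cn_iid M K (s / N) (\<lambda>\<omega>. \<lambda>m\<in>{..<K}. block_sum K N (z \<omega>) m / of_nat N)"
proof -
  define W where "W m \<omega> = (\<Sum>i\<in>block_indices K N m. z \<omega> i) / of_nat N" for m \<omega>
  have zm: "z \<in> measurable M (\<Pi>\<^sub>M i\<in>{..<K * N}. borel)"
    using z by (simp add: has_cn_iid_def)
  have indep: "indep_vars (\<lambda>_. borel) (\<lambda>i \<omega>. z \<omega> i) {..<K * N}"
    and law: "\<And>i. i < K * N \<Longrightarrow> distr M borel (\<lambda>\<omega>. z \<omega> i) = cgauss s"
    using z K N s by (auto simp: has_cn_iid_iff[OF zm])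
  have "indep_vars (\<lambda>_. borel) (\<lambda>m \<omega>. \<Sum>i\<in>block_indices K N m. z \<omega> i) {..<K}"
    by (intro indep_vars_sum_blocks[OF indep] block_indices_subset disjoint_family_on_block_indices) auto
  then have W_indep: "indep_vars (\<lambda>_. borel) W {..<K}"
    unfolding W_def by (rule indep_vars_compose2[where Y="\<lambda>_ c. c / of_nat N"]) auto
  have W_law: "distr M borel (W m) = cgauss (s / N)" if "m < K" for m
  proof -
    have block: "block_indices K N m \<subseteq> {..<K * N}"
      using that by (rule block_indices_subset)
    then have "finite (block_indices K N m)" "block_indices K N m \<noteq> {}"
      using N card_block_indices[OF K, of N m] by (auto intro: finite_subset)
    moreover have "distr M borel (\<lambda>\<omega>. z \<omega> i) = cgauss s" if "i \<in> block_indices K N m" for i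
      using law block that by auto
    ultimately show ?thesis
      using distr_mean_cgauss[OF _ _ indep_vars_subset[OF indep block] _ s]
      by (simp add: W_def[abs_def] card_block_indices[OF K])
  qed
  have "has_cn_iid M K (s / N) (\<lambda>\<omega>. \<lambda>m\<in>{..<K}. W m \<omega>)"
  proof (subst has_cn_iid_iff)
    show "(\<lambda>\<omega>. \<lambda>m\<in>{..<K}. W m \<omega>) \<in> measurable M (\<Pi>\<^sub>M m\<in>{..<K}. borel)"
      using W_indep by (intro measurable_restrict) (simp add: indep_vars_def)
    have "indep_vars (\<lambda>_. borel) (\<lambda>m \<omega>. (\<lambda>m\<in>{..<K}. W m \<omega>) m) {..<K}"
      using W_indep by (rule iffD1[OF indep_vars_cong, rotated -1]) auto
    then show "indep_vars (\<lambda>_. borel) (\<lambda>m \<omega>. (\<lambda>m\<in>{..<K}. W m \<omega>) m) {..<K} \<and>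
        (\<forall>m<K. distr M borel (\<lambda>\<omega>. (\<lambda>m\<in>{..<K}. W m \<omega>) m) = cgauss (s / N))"
      using W_law by simp
  qed (use K N s in auto)
  then show ?thesis
    using K by (simp add: W_def block_sum_eq_sum_block_indices)
qed

theorem lemma1:
  fixes M N mp np :: nat
    and l k T T' Es Ep sigma2 Nr :: real
    and alpha :: complex
    and Xd :: "nat \<Rightarrow> nat \<Rightarrow> complex"
    and P :: "'w measure"
    and z :: "'w \<Rightarrow> nat \<Rightarrow> complex"
  assumes "M \<ge> 1" and "N \<ge> 1"
    and "0 < T" and "T < T'"
    and "Es > 0" and "Ep > 0" and "sigma2 > 0" and "Nr \<ge> 1"
    and "mp < M" and "np < N"
    and "prob_space P"
    and "has_cn_iid P (M * N) (sigma2 / Nr) z"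
  shows "let x = (\<lambda>i. of_real (sqrt Es) * vecm M Xd i + of_real (sqrt Ep) * pilot M mp np i);
             y = (\<lambda>\<omega> i. alpha * mv (M * N) (Hm M N T T' l k) x i + z \<omega> i);
             u = (\<lambda>\<omega> m. (1 / of_nat N) * mv (M * N) (kron M M (\<lambda>_ _. 1) idm) (y \<omega>) m)
         in \<exists>zt. has_cn_iid P M (sigma2 / (real N * Nr)) zt \<and>
              (\<forall>\<omega>\<in>space P. \<forall>m<M.
                 u \<omega> m = alpha * (of_real (sqrt Ep) / of_nat N * gu M N T T' mp l k m
                          + of_real (sqrt Es) / of_nat N *
                              mv M (mm M (Dt_pow M N T T' k) (Cm M l)) (\<lambda>q. \<Sum>n<N. Xd q n) m)
                        + zt \<omega> m)"
proof -
  interpret prob_space P by fact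
  let ?x = "\<lambda>i. of_real (sqrt Es) * vecm M Xd i + of_real (sqrt Ep) * pilot M mp np i"
  let ?zt = "\<lambda>\<omega>. \<lambda>m\<in>{..<M}. block_sum M N (z \<omega>) m / of_nat N"
  have "has_cn_iid P M (sigma2 / Nr / N) ?zt"
    using assms by (intro has_cn_iid_block_mean) auto
  then have noise: "has_cn_iid P M (sigma2 / (real N * Nr)) ?zt"
    by (simp add: field_simps)
  have "(1 / of_nat N) * mv (M * N) (kron M M (\<lambda>_ _. 1) idm)
          (\<lambda>i. alpha * mv (M * N) (Hm M N T T' l k) ?x i + z \<omega> i) m
      = alpha * (of_real (sqrt Ep) / of_nat N * gu M N T T' mp l k m
                 + of_real (sqrt Es) / of_nat N *
                     mv M (mm M (Dt_pow M N T T' k) (Cm M l)) (\<lambda>q. \<Sum>n<N. Xd q n) m)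
        + ?zt \<omega> m" if m: "m < M" for \<omega> m
  proof -
    have "(1 / of_nat N) * mv (M * N) (kron M M (\<lambda>_ _. 1) idm)
            (\<lambda>i. alpha * mv (M * N) (Hm M N T T' l k) ?x i + z \<omega> i) m
        = alpha * (block_sum M N (mv (M * N) (Hm M N T T' l k) ?x) m / of_nat N)
          + block_sum M N (z \<omega>) m / of_nat N"
      unfolding mv_kron_ones_idm[OF m] block_sum_add_scaled by (simp add: add_divide_distrib algebra_simps)
    then show ?thesis
      using m assms by (simp add: block_sum_noiseless_output add_divide_distrib)
  qed
  with noise show ?thesis
    unfolding Let_def by blast
qed

end
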